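(* Let $G$ be a bipartite graph and $M$ a matching of $G$. Let $C$ be an $M$-cycle of $G$ and let $P = P[x,y]$ be an $M$-path in $G - V(C)$. Put $n = |C|/2$ and assume that $e_G(\{x,y\}, V(C)) > n$. Then for each $i$ with $1 \le i \le n$, the induced subgraph $G[V(P)\cup V(C)]$ contains an $M$-cycle of length $|P| + 2i$.
   Context: Graphs are finite and simple. A cycle $C$ is an $M$-cycle if $|E(C)\cap M|=|C|/2$. An $M$-path $P[x,y]$ is a path with ends $x$ and $y$ whose edges alternate between edges of $M$ and edges not in $M$, beginning and ending with edges of $M$. $|P|$ and $|C|$ denote numbers of vertices. For disjoint vertex sets $S,T$, $e_G(S,T)$ is the number of edges of $G$ between $S$ and $T$. *)

theory Defs
  imports Main
begin

definition graph :: "'a set \<Rightarrow> 'a set set \<Rightarrow> bool" where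
  "graph V E \<longleftrightarrow> finite V \<and>
     (\<forall>e\<in>E. \<exists>u v. u \<noteq> v \<and> u \<in> V \<and> v \<in> V \<and> e = {u, v})"

definition bipartite :: "'a set \<Rightarrow> 'a set set \<Rightarrow> bool" where
  "bipartite V E \<longleftrightarrow> (\<exists>A B. A \<inter> B = {} \<and> A \<union> B = V \<and>
     (\<forall>e\<in>E. \<exists>a\<in>A. \<exists>b\<in>B. e = {a, b}))"

definition matching :: "'a set set \<Rightarrow> 'a set set \<Rightarrow> bool" where
  "matching E M \<longleftrightarrow> M \<subseteq> E \<and> (\<forall>e1\<in>M. \<forall>e2\<in>M. e1 \<noteq> e2 \<longrightarrow> e1 \<inter> e2 = {})"

text \<open>A cycle is represented by the list of its (distinct) vertices in cyclic order.\<close>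
definition cycle_edges :: "'a list \<Rightarrow> 'a set set" where
  "cycle_edges cs = {{cs ! i, cs ! ((i + 1) mod length cs)} | i. i < length cs}"

definition is_cycle :: "'a set set \<Rightarrow> 'a list \<Rightarrow> bool" where
  "is_cycle E cs \<longleftrightarrow> distinct cs \<and> length cs \<ge> 3 \<and> cycle_edges cs \<subseteq> E"

definition M_cycle :: "'a set set \<Rightarrow> 'a set set \<Rightarrow> 'a list \<Rightarrow> bool" where
  "M_cycle E M cs \<longleftrightarrow> is_cycle E cs \<and> 2 * card (cycle_edges cs \<inter> M) = length cs"

definition is_path :: "'a set set \<Rightarrow> 'a list \<Rightarrow> bool" where
  "is_path E ps \<longleftrightarrow> ps \<noteq> [] \<and> distinct ps \<and>
     (\<forall>i. Suc i < length ps \<longrightarrow> {ps ! i, ps ! Suc i} \<in> E)"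

definition M_path :: "'a set set \<Rightarrow> 'a set set \<Rightarrow> 'a list \<Rightarrow> 'a \<Rightarrow> 'a \<Rightarrow> bool" where
  "M_path E M ps x y \<longleftrightarrow> is_path E ps \<and> length ps \<ge> 2 \<and> hd ps = x \<and> last ps = y \<and>
     (\<forall>i. Suc i < length ps \<longrightarrow> ({ps ! i, ps ! Suc i} \<in> M \<longleftrightarrow> even i)) \<and>
     {ps ! (length ps - 2), ps ! (length ps - 1)} \<in> M"

definition induced_edges :: "'a set set \<Rightarrow> 'a set \<Rightarrow> 'a set set" where
  "induced_edges E S = {e \<in> E. e \<subseteq> S}"

definition e_between :: "'a set set \<Rightarrow> 'a set \<Rightarrow> 'a set \<Rightarrow> nat" where
  "e_between E S T = card {e \<in> E. \<exists>u\<in>S. \<exists>v\<in>T. e = {u, v}}"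

end

theory Submission
  imports Defs
begin

text \<open>Parametrise the M-cycle C as a walk f with period 2n whose edge f(j) f(j+1) lies in M
  exactly for even j. Bipartiteness puts the ends x and y of P on opposite sides, so the positions
  of the C-neighbours of x all have one parity and those of y the other. Shifting the even
  positions by the odd amount 2i - 1 maps them injectively onto the n odd positions, so more than
  n neighbours force a position j with f(j) adjacent to one end of P and f(j + 2i - 1) adjacent to
  the other. The window f(j), ..., f(j + 2i - 1), reversed if necessary, is an M-alternating path
  that begins and ends with edges of M, and P followed by it closes up through two edges outside
  M into an M-cycle on |P| + 2i vertices.\<close>

definition M_alternating :: "'a set set \<Rightarrow> 'a set set \<Rightarrow> 'a list \<Rightarrow> bool" where
  "M_alternating E M ps \<longleftrightarrow>
     (\<forall>i. Suc i < length ps \<longrightarrow> {ps ! i, ps ! Suc i} \<in> E \<and> ({ps ! i, ps ! Suc i} \<in> M \<longleftrightarrow> even i))"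

definition M_alternating_walk :: "'a set set \<Rightarrow> 'a set set \<Rightarrow> (nat \<Rightarrow> 'a) \<Rightarrow> bool" where
  "M_alternating_walk E M f \<longleftrightarrow> (\<forall>j. {f j, f (Suc j)} \<in> E \<and> ({f j, f (Suc j)} \<in> M \<longleftrightarrow> even j))"

lemma inj_on_mod_interval: "inj_on (\<lambda>k::nat. k mod L) {a..<a + L}"
proof -
  have False if "s < t" "s \<in> {a..<a + L}" "t \<in> {a..<a + L}" "s mod L = t mod L" for s t
  proof -
    have "L dvd t - s" using that mod_eq_dvd_iff_nat[of s t L] by simp
    moreover have "0 < t - s" "t - s < L" using that by auto
    ultimately show False using nat_dvd_not_less by blast
  qed
  then show ?thesis by (intro inj_onI) (metis linorder_neqE_nat)
qed

lemma card_parity_class: "card {k::nat. k < 2 * n \<and> even k = b} = n"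
proof -
  define r where "r = (if b then 0 else 1::nat)"
  have "{k. k < 2 * n \<and> even k = b} = (\<lambda>j. 2 * j + r) ` {..<n}"
  proof (intro set_eqI iffI)
    fix k assume "k \<in> {k. k < 2 * n \<and> even k = b}"
    then show "k \<in> (\<lambda>j. 2 * j + r) ` {..<n}"
      by (intro image_eqI[of _ _ "k div 2"]) (auto simp: r_def)
  qed (auto simp: r_def split: if_splits)
  moreover have "inj_on (\<lambda>j. 2 * j + r) {..<n}" by (auto intro: inj_onI)
  ultimately show ?thesis by (simp add: card_image)
qed

lemma exists_in_image_inter:
  assumes "finite T" "inj_on \<sigma> X" "\<sigma> ` X \<subseteq> T" "Y \<subseteq> T" "card T < card X + card Y"
  shows "\<exists>a\<in>X. \<sigma> a \<in> Y"
proof (rule ccontr)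
  assume "\<not> ?thesis"
  then have "\<sigma> ` X \<inter> Y = {}" by blast
  then have "card X + card Y = card (\<sigma> ` X \<union> Y)"
    using assms by (simp add: card_image card_Un_disjoint finite_subset)
  also have "\<dots> \<le> card T" using assms by (intro card_mono) auto
  finally show False using assms(5) by simp
qed

lemma exists_odd_shift_pair:
  fixes X Y :: "nat set" and n d :: nat
  assumes X: "X \<subseteq> {k. k < 2 * n \<and> even k}" and Y: "Y \<subseteq> {k. k < 2 * n \<and> odd k}"
    and "odd d" and big: "n < card X + card Y"
  shows "\<exists>j\<in>X. (j + d) mod (2 * n) \<in> Y"
proof (rule exists_in_image_inter)
  let ?L = "2 * n"
  have "0 < n"
  proof (rule ccontr)
    assume "\<not> 0 < n"
    then have "X = {}" "Y = {}" using X Y by auto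
    then show False using big by simp
  qed
  show "inj_on (\<lambda>j. (j + d) mod ?L) X"
  proof (rule inj_onI)
    fix a b assume "a \<in> X" "b \<in> X" "(a + d) mod ?L = (b + d) mod ?L"
    then have "a mod ?L = b mod ?L" by (simp add: nat_mod_eq_iff)
    moreover have "a < ?L" "b < ?L" using X \<open>a \<in> X\<close> \<open>b \<in> X\<close> by auto
    ultimately show "a = b" by simp
  qed
  show "(\<lambda>j. (j + d) mod ?L) ` X \<subseteq> {k. k < ?L \<and> even k = False}"
    using X \<open>odd d\<close> \<open>0 < n\<close> by (auto simp: dvd_mod_iff)
  show "Y \<subseteq> {k. k < ?L \<and> even k = False}" using Y by auto
  show "card {k. k < ?L \<and> even k = False} < card X + card Y"
    using big card_parity_class[of n False] by simp
qed simp

lemma matching_partner_unique: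
  assumes "matching E M" "{u, v} \<in> M" "{u, w} \<in> M"
  shows "v = w"
proof -
  have disjoint: "\<forall>e1\<in>M. \<forall>e2\<in>M. e1 \<noteq> e2 \<longrightarrow> e1 \<inter> e2 = {}"
    using assms(1) unfolding matching_def by simp
  have "{u, v} = {u, w}"
  proof (rule ccontr)
    assume "{u, v} \<noteq> {u, w}"
    then have "{u, v} \<inter> {u, w} = {}" by (rule disjoint[rule_format, OF assms(2,3)])
    then show False by simp
  qed
  then show ?thesis by (auto simp: doubleton_eq_iff)
qed

lemma half_independent_set_of_cycle_alternates:
  fixes S :: "nat set"
  assumes S: "S \<subseteq> {..<L}" and card: "2 * card S = L"
    and independent: "\<And>k. k \<in> S \<Longrightarrow> Suc k mod L \<notin> S"
    and "k < L"
  shows "k \<in> S \<longleftrightarrow> (0 \<in> S \<longleftrightarrow> even k)"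
proof -
  let ?s = "\<lambda>k. Suc k mod L"
  have inj: "inj_on ?s {..<L}"
  proof (rule inj_onI)
    fix a b assume "a \<in> {..<L}" "b \<in> {..<L}" "?s a = ?s b"
    then show "a = b" using inj_onD[OF inj_on_mod_interval[of L 1], of "Suc a" "Suc b"] by simp
  qed
  \<comment> \<open>the successor map sends S injectively into its complement, which has the same size\<close>
  have "card (?s ` S) = card S" using inj_on_subset[OF inj S] by (rule card_image)
  moreover have "card ({..<L} - S) = card S"
    using card_Diff_subset[OF finite_subset[OF S] S] card by simp
  moreover have "?s ` S \<subseteq> {..<L} - S"
  proof
    fix t assume "t \<in> ?s ` S"
    then obtain k where "k \<in> S" "t = ?s k" by blast
    then show "t \<in> {..<L} - S" using S independent by fastforce
  qed
  ultimately have onto: "?s ` S = {..<L} - S"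
    by (intro card_subset_eq) simp_all
  have step: "k \<in> S \<longleftrightarrow> Suc k \<notin> S" if lt: "Suc k < L" for k
  proof
    assume "k \<in> S"
    then show "Suc k \<notin> S" using independent[of k] lt by simp
  next
    assume "Suc k \<notin> S"
    then have "Suc k \<in> ?s ` S" using onto lt by simp
    then obtain k' where "k' \<in> S" "?s k' = ?s k" using lt by auto
    moreover have "k' < L" "k < L" using S \<open>k' \<in> S\<close> lt by auto
    ultimately show "k \<in> S" using inj_onD[OF inj] by (metis lessThan_iff)
  qed
  show ?thesis using \<open>k < L\<close>
  proof (induction k)
    case (Suc k)
    then have "k \<in> S \<longleftrightarrow> (0 \<in> S \<longleftrightarrow> even k)" by simp
    then show ?case using step[OF Suc.prems] by (simp only: even_Suc) blast
  qed simp
qed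

lemma inj_on_cycle_edge:
  assumes "distinct cs" "3 \<le> length cs"
  shows "inj_on (\<lambda>k. {cs ! k, cs ! (Suc k mod length cs)}) {..<length cs}"
proof (rule inj_onI)
  let ?L = "length cs"
  have nth_eq: "cs ! a = cs ! b \<longleftrightarrow> a = b" if "a < ?L" "b < ?L" for a b
    using assms(1) that by (simp add: nth_eq_iff_index_eq)
  fix a b assume a: "a \<in> {..<?L}" and b: "b \<in> {..<?L}"
    and eq: "{cs ! a, cs ! (Suc a mod ?L)} = {cs ! b, cs ! (Suc b mod ?L)}"
  show "a = b"
  proof (rule ccontr)
    assume "a \<noteq> b"
    then have "cs ! a \<noteq> cs ! b" using nth_eq a b by simp
    then have "cs ! a = cs ! (Suc b mod ?L)" "cs ! (Suc a mod ?L) = cs ! b"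
      using eq by (auto simp: doubleton_eq_iff)
    moreover have "0 < ?L" using assms(2) by linarith
    ultimately have "a = Suc b mod ?L" "Suc a mod ?L = b"
      using nth_eq a b by (metis lessThan_iff mod_less_divisor)+
    then have "(b + 2) mod ?L = b mod ?L" using b by (metis mod_Suc_eq add_2_eq_Suc' lessThan_iff mod_less)
    then have "?L dvd 2" using mod_eq_dvd_iff_nat[of b "b + 2" ?L] by simp
    then show False using dvd_imp_le[of ?L 2] assms(2) by simp
  qed
qed

lemma M_cycle_edges_alternate:
  assumes "matching E M" "M_cycle E M cs" "k < length cs"
  shows "{cs ! k, cs ! (Suc k mod length cs)} \<in> M \<longleftrightarrow>
    ({cs ! 0, cs ! (Suc 0 mod length cs)} \<in> M \<longleftrightarrow> even k)"
proof -
  let ?L = "length cs"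
  let ?e = "\<lambda>k. {cs ! k, cs ! (Suc k mod ?L)}"
  define S where "S = {k. k < ?L \<and> ?e k \<in> M}"
  have dist: "distinct cs" and L3: "3 \<le> ?L" and card: "2 * card (cycle_edges cs \<inter> M) = ?L"
    using assms(2) by (auto simp: M_cycle_def is_cycle_def)
  have inj: "inj_on ?e {..<?L}" using inj_on_cycle_edge[OF dist L3] .
  have L0: "0 < ?L" using L3 by linarith
  have "cycle_edges cs \<inter> M = ?e ` S" unfolding cycle_edges_def S_def by auto
  moreover have "inj_on ?e S" using inj by (rule inj_on_subset) (auto simp: S_def)
  ultimately have "2 * card S = ?L" using card by (simp add: card_image)
  moreover have "Suc k mod ?L \<notin> S" if "k \<in> S" for k
  proof
    assume succ: "Suc k mod ?L \<in> S"
    have "Suc k mod ?L < ?L" "k < ?L" using L0 that S_def by auto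
    moreover have "Suc k mod ?L \<noteq> k" using \<open>k < ?L\<close> L3 by (simp add: mod_Suc)
    ultimately have "?e k \<noteq> ?e (Suc k mod ?L)" using inj by (auto dest: inj_onD)
    moreover have "?e k \<in> M" "?e (Suc k mod ?L) \<in> M" using that succ S_def by auto
    ultimately show False
      using matching_partner_unique[OF assms(1), of "cs ! (Suc k mod ?L)"]
      by (auto simp: insert_commute)
  qed
  ultimately have "k \<in> S \<longleftrightarrow> (0 \<in> S \<longleftrightarrow> even k)"
    using half_independent_set_of_cycle_alternates[of S ?L k] assms(3) S_def by blast
  then show ?thesis using assms(3) S_def by auto
qed

lemma M_cycle_alternating_walk:
  assumes "matching E M" "M_cycle E M cs"
  obtains f where "M_alternating_walk E M f"
    and "\<And>a b. f a = f b \<longleftrightarrow> a mod length cs = b mod length cs"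
    and "f ` {..<length cs} = set cs"
proof -
  let ?L = "length cs"
  have dist: "distinct cs" and L3: "3 \<le> ?L" and edges: "cycle_edges cs \<subseteq> E"
    and card: "2 * card (cycle_edges cs \<inter> M) = ?L"
    using assms(2) by (auto simp: M_cycle_def is_cycle_def)
  have L0: "0 < ?L" using L3 by linarith
  have "even ?L" using card by (metis dvd_triv_left)
  \<comment> \<open>start at an edge of M\<close>
  define r where "r = (if {cs ! 0, cs ! (Suc 0 mod ?L)} \<in> M then 0 else 1::nat)"
  define f where "f j = cs ! ((j + r) mod ?L)" for j
  have "M_alternating_walk E M f"
    unfolding M_alternating_walk_def
  proof
    fix j
    let ?k = "(j + r) mod ?L"
    have k: "?k < ?L" using L0 by simp
    have e: "{f j, f (Suc j)} = {cs ! ?k, cs ! (Suc ?k mod ?L)}"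
      by (simp add: f_def mod_Suc_eq)
    have "{cs ! ?k, cs ! (Suc ?k mod ?L)} \<in> cycle_edges cs"
      using k unfolding cycle_edges_def by auto
    then have "{cs ! ?k, cs ! (Suc ?k mod ?L)} \<in> E" using edges by blast
    moreover have "even ?k \<longleftrightarrow> even (j + r)" using \<open>even ?L\<close> by (simp add: dvd_mod_iff)
    then have "{cs ! ?k, cs ! (Suc ?k mod ?L)} \<in> M \<longleftrightarrow> even j"
      using M_cycle_edges_alternate[OF assms k] by (auto simp: r_def)
    ultimately show "{f j, f (Suc j)} \<in> E \<and> ({f j, f (Suc j)} \<in> M \<longleftrightarrow> even j)"
      unfolding e by blast
  qed
  moreover have "f a = f b \<longleftrightarrow> a mod ?L = b mod ?L" for a b
  proof -
    have "f a = f b \<longleftrightarrow> (a + r) mod ?L = (b + r) mod ?L"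
      unfolding f_def using dist L0 by (simp add: nth_eq_iff_index_eq)
    then show ?thesis by (simp add: nat_mod_eq_iff)
  qed
  moreover have "f ` {..<?L} = set cs"
  proof
    show "f ` {..<?L} \<subseteq> set cs" using L0 by (auto simp: f_def)
    show "set cs \<subseteq> f ` {..<?L}"
    proof
      fix v assume "v \<in> set cs"
      then obtain t where t: "t < ?L" "cs ! t = v" by (auto simp: in_set_conv_nth)
      have "r \<le> 1" by (simp add: r_def)
      moreover have "1 \<le> ?L" using L0 by linarith
      ultimately have "((t + ?L - r) mod ?L + r) mod ?L = t" using t(1) by (simp add: mod_add_left_eq)
      then have "f ((t + ?L - r) mod ?L) = v" using t(2) by (simp add: f_def)
      then show "v \<in> f ` {..<?L}" using L0 by (intro image_eqI) auto
    qed
  qed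
  ultimately show thesis using that by blast
qed

lemma M_cycle_of_M_alternating:
  assumes dist: "distinct cs" and L3: "3 \<le> length cs" and even: "even (length cs)"
    and alt: "M_alternating E M cs"
    and closing: "{last cs, hd cs} \<in> E" "{last cs, hd cs} \<notin> M"
  shows "M_cycle E M cs"
proof -
  let ?L = "length cs"
  let ?e = "\<lambda>k. {cs ! k, cs ! (Suc k mod ?L)}"
  have edge: "?e k \<in> E \<and> (?e k \<in> M \<longleftrightarrow> even k)" if k: "k < ?L" for k
  proof (cases "Suc k < ?L")
    case True
    then show ?thesis using alt unfolding M_alternating_def by simp
  next
    case False
    then have "Suc k = ?L" using k by simp
    then have "odd k" using even by (metis even_Suc)
    have "cs \<noteq> []" using L3 by auto
    then have "?e k = {last cs, hd cs}"
      using \<open>Suc k = ?L\<close> by (simp add: last_conv_nth hd_conv_nth flip: \<open>Suc k = ?L\<close>)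
    then show ?thesis using closing \<open>odd k\<close> by simp
  qed
  have edges: "cycle_edges cs = ?e ` {..<?L}" unfolding cycle_edges_def by auto
  then have "cycle_edges cs \<inter> M = ?e ` {k. k < ?L \<and> even k = True}" using edge by auto
  moreover have "inj_on ?e {k. k < ?L \<and> even k = True}"
    using inj_on_cycle_edge[OF dist L3] by (rule inj_on_subset) auto
  ultimately have "card (cycle_edges cs \<inter> M) = card {k. k < ?L \<and> even k = True}"
    by (simp add: card_image)
  also have "\<dots> = ?L div 2" using card_parity_class[of "?L div 2" True] even by simp
  finally have "2 * card (cycle_edges cs \<inter> M) = ?L" using even by simp
  moreover have "cycle_edges cs \<subseteq> E" using edges edge by auto
  ultimately show ?thesis using dist L3 unfolding M_cycle_def is_cycle_def by simp
qed

lemma M_cycle_induced_edges: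
  assumes "M_cycle E M cs" "set cs \<subseteq> S"
  shows "M_cycle (induced_edges E S) M cs"
proof -
  have "0 < length cs" using assms(1) unfolding M_cycle_def is_cycle_def by linarith
  then have "e \<subseteq> set cs" if "e \<in> cycle_edges cs" for e
    using that unfolding cycle_edges_def by auto
  then have "cycle_edges cs \<subseteq> induced_edges E S"
    using assms unfolding M_cycle_def is_cycle_def induced_edges_def by blast
  then show ?thesis using assms(1) unfolding M_cycle_def is_cycle_def by blast
qed

lemma M_alternating_append:
  assumes alt: "M_alternating E M xs" "M_alternating E M ys"
    and even: "even (length xs)" and ne: "xs \<noteq> []" "ys \<noteq> []"
    and junction: "{last xs, hd ys} \<in> E" "{last xs, hd ys} \<notin> M"
  shows "M_alternating E M (xs @ ys)"
  unfolding M_alternating_def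
proof (intro allI impI)
  fix i assume i: "Suc i < length (xs @ ys)"
  let ?zs = "xs @ ys"
  consider "Suc i < length xs" | "Suc i = length xs" | "length xs \<le> i" by linarith
  then show "{?zs ! i, ?zs ! Suc i} \<in> E \<and> ({?zs ! i, ?zs ! Suc i} \<in> M \<longleftrightarrow> even i)"
  proof cases
    case 1
    then show ?thesis using alt(1) unfolding M_alternating_def by (simp add: nth_append)
  next
    case 2
    then have "odd i" using even by (metis even_Suc)
    have "?zs ! i = last xs" "?zs ! Suc i = hd ys"
      using 2 ne by (simp_all add: nth_append last_conv_nth hd_conv_nth flip: 2)
    then show ?thesis using junction \<open>odd i\<close> by simp
  next
    case 3
    define m where "m = i - length xs"
    have "Suc m < length ys" "i = length xs + m" using i 3 unfolding m_def by auto
    then show ?thesis using alt(2) even unfolding M_alternating_def by (simp add: nth_append)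
  qed
qed

lemma M_alternating_rev:
  assumes alt: "M_alternating E M xs" and even: "even (length xs)"
  shows "M_alternating E M (rev xs)"
  unfolding M_alternating_def
proof (intro allI impI)
  fix i assume i: "Suc i < length (rev xs)"
  define j where "j = length xs - Suc (Suc i)"
  have j: "Suc j < length xs" "rev xs ! i = xs ! Suc j" "rev xs ! Suc i = xs ! j"
    using i by (auto simp: j_def rev_nth Suc_diff_Suc)
  have "even j \<longleftrightarrow> even i"
  proof -
    have "length xs = i + j + 2" using i unfolding j_def by simp
    then show ?thesis using even by simp
  qed
  then show "{rev xs ! i, rev xs ! Suc i} \<in> E \<and> ({rev xs ! i, rev xs ! Suc i} \<in> M \<longleftrightarrow> even i)"
    using alt j unfolding M_alternating_def by (simp add: insert_commute)
qed

lemma M_alternating_walk_window: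
  assumes "M_alternating_walk E M f" "even j"
  shows "M_alternating E M (map f [j..<j + l])"
  using assms unfolding M_alternating_def M_alternating_walk_def by (simp add: nth_append)

lemma distinct_window_of_periodic:
  assumes periodic: "\<And>a b. f a = f b \<longleftrightarrow> a mod L = b mod L" and "l \<le> L"
  shows "distinct (map f [j..<j + l])"
proof -
  have "inj_on f {j..<j + l}"
  proof (rule inj_onI)
    fix a b assume "a \<in> {j..<j + l}" "b \<in> {j..<j + l}" "f a = f b"
    then show "a = b"
      using periodic inj_onD[OF inj_on_mod_interval[of L j], of a b] \<open>l \<le> L\<close> by auto
  qed
  then show ?thesis by (simp add: distinct_map)
qed

lemma M_path_even_length:
  assumes "M_path E M ps x y"
  shows "even (length ps)"
proof -
  have "Suc (length ps - 2) < length ps" "Suc (length ps - 2) = length ps - 1"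
    using assms unfolding M_path_def by auto
  then have "even (length ps - 2)" using assms unfolding M_path_def by metis
  then show ?thesis using assms unfolding M_path_def by auto
qed

lemma M_path_ends_unmatched_outside:
  assumes "matching E M" "M_path E M ps x y" "v \<notin> set ps"
  shows "{x, v} \<notin> M" "{y, v} \<notin> M"
proof -
  have "ps \<noteq> []" "2 \<le> length ps" using assms(2) unfolding M_path_def is_path_def by auto
  then have "x = ps ! 0" "y = ps ! (length ps - 1)"
    "ps ! 1 \<in> set ps" "ps ! (length ps - 2) \<in> set ps"
    using assms(2) unfolding M_path_def by (auto simp: hd_conv_nth last_conv_nth)
  moreover have "{ps ! 0, ps ! 1} \<in> M" "{ps ! (length ps - 2), ps ! (length ps - 1)} \<in> M"
    using assms(2) \<open>2 \<le> length ps\<close> unfolding M_path_def by auto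
  ultimately show "{x, v} \<notin> M" "{y, v} \<notin> M"
    using assms(3) matching_partner_unique[OF assms(1)] by (metis insert_commute)+
qed

lemma bipartite_sides:
  assumes "bipartite V E"
  obtains A where "\<And>u v. {u, v} \<in> E \<Longrightarrow> u \<in> A \<longleftrightarrow> v \<notin> A"
proof -
  obtain A B where AB: "A \<inter> B = {}" "\<forall>e\<in>E. \<exists>a\<in>A. \<exists>b\<in>B. e = {a, b}"
    using assms unfolding bipartite_def by blast
  have "u \<in> A \<longleftrightarrow> v \<notin> A" if uv_edge: "{u, v} \<in> E" for u v
  proof -
    obtain a b where "a \<in> A" "b \<in> B" and uv: "{u, v} = {a, b}"
      using AB(2) uv_edge by blast
    moreover have "b \<notin> A" using AB(1) \<open>b \<in> B\<close> by blast
    moreover have "u = a \<and> v = b \<or> u = b \<and> v = a" using uv by (simp add: doubleton_eq_iff)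
    ultimately show ?thesis by blast
  qed
  then show thesis by (rule that)
qed

lemma side_alternates_along_walk:
  assumes side: "\<And>u v. {u, v} \<in> E \<Longrightarrow> u \<in> A \<longleftrightarrow> v \<notin> A"
    and walk: "\<And>i. Suc i < l \<Longrightarrow> {g i, g (Suc i)} \<in> E" and "j < l"
  shows "g j \<in> A \<longleftrightarrow> (g 0 \<in> A \<longleftrightarrow> even j)"
  using \<open>j < l\<close>
proof (induction j)
  case (Suc j)
  then have "g j \<in> A \<longleftrightarrow> (g 0 \<in> A \<longleftrightarrow> even j)" by simp
  moreover have "g j \<in> A \<longleftrightarrow> g (Suc j) \<notin> A" using side walk Suc.prems by blast
  ultimately show ?case by (simp only: even_Suc) blast
qed simp

lemma M_path_ends_opposite_sides:
  assumes side: "\<And>u v. {u, v} \<in> E \<Longrightarrow> u \<in> A \<longleftrightarrow> v \<notin> A" and path: "M_path E M ps x y"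
  shows "x \<in> A \<longleftrightarrow> y \<notin> A"
proof -
  have ne: "ps \<noteq> []" and len: "2 \<le> length ps"
    and walk: "\<And>i. Suc i < length ps \<Longrightarrow> {ps ! i, ps ! Suc i} \<in> E"
    using path unfolding M_path_def is_path_def by auto
  have "length ps - 1 < length ps" using ne by simp
  with side walk have "ps ! (length ps - 1) \<in> A \<longleftrightarrow> (ps ! 0 \<in> A \<longleftrightarrow> even (length ps - 1))"
    by (rule side_alternates_along_walk)
  moreover have "odd (length ps - 1)" using M_path_even_length[OF path] ne by simp
  moreover have "ps ! 0 = x" "ps ! (length ps - 1) = y"
    using path ne unfolding M_path_def by (simp_all add: hd_conv_nth last_conv_nth)
  ultimately show ?thesis by simp
qed

lemma e_between_image_le:
  assumes "finite I"
  shows "e_between E {x, y} (f ` I) \<le> card {k \<in> I. {x, f k} \<in> E} + card {k \<in> I. {y, f k} \<in> E}"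
proof -
  let ?NX = "{k \<in> I. {x, f k} \<in> E}" and ?NY = "{k \<in> I. {y, f k} \<in> E}"
  have "{e \<in> E. \<exists>u\<in>{x, y}. \<exists>v\<in>f ` I. e = {u, v}} \<subseteq>
      (\<lambda>k. {x, f k}) ` ?NX \<union> (\<lambda>k. {y, f k}) ` ?NY"
    by auto
  then have "e_between E {x, y} (f ` I) \<le> card ((\<lambda>k. {x, f k}) ` ?NX \<union> (\<lambda>k. {y, f k}) ` ?NY)"
    unfolding e_between_def using assms by (intro card_mono) auto
  also have "\<dots> \<le> card ((\<lambda>k. {x, f k}) ` ?NX) + card ((\<lambda>k. {y, f k}) ` ?NY)"
    by (rule card_Un_le)
  also have "\<dots> \<le> card ?NX + card ?NY"
    using assms by (intro add_mono card_image_le) auto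
  finally show ?thesis .
qed

lemma exists_neighbour_pair_at_odd_distance:
  assumes side: "\<And>u v. {u, v} \<in> E \<Longrightarrow> u \<in> A \<longleftrightarrow> v \<notin> A"
    and opposite: "x \<in> A \<longleftrightarrow> y \<notin> A"
    and walk: "\<And>j. {f j, f (Suc j)} \<in> E"
    and periodic: "\<And>a b. f a = f b \<longleftrightarrow> a mod (2 * n) = b mod (2 * n)"
    and many: "n < e_between E {x, y} (f ` {..<2 * n})" and "odd d"
  obtains j where "even j" "{y, f j} \<in> E \<and> {x, f (j + d)} \<in> E \<or> {x, f j} \<in> E \<and> {y, f (j + d)} \<in> E"
proof -
  define NX where "NX = {k \<in> {..<2 * n}. {x, f k} \<in> E}"
  define NY where "NY = {k \<in> {..<2 * n}. {y, f k} \<in> E}"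
  have parity: "even k \<longleftrightarrow> (f 0 \<in> A \<longleftrightarrow> v \<notin> A)" if "{v, f k} \<in> E" for v k
    using side[OF that] side_alternates_along_walk[OF side, where l = "Suc k" and g = f and j = k] walk
    by auto
  have count: "n < card NX + card NY"
    using many e_between_image_le[of "{..<2 * n}" E x y f] unfolding NX_def NY_def by simp
  have shift: "f ((j + d) mod (2 * n)) = f (j + d)" for j using periodic by simp
  show thesis
  proof (cases "f 0 \<in> A \<longleftrightarrow> x \<notin> A")
    case True
    then have "NX \<subseteq> {k. k < 2 * n \<and> even k}" "NY \<subseteq> {k. k < 2 * n \<and> odd k}"
      using parity opposite unfolding NX_def NY_def by auto
    from exists_odd_shift_pair[OF this \<open>odd d\<close> count]
    obtain j where "j \<in> NX" "(j + d) mod (2 * n) \<in> NY" by blast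
    then show thesis using that[of j] True parity shift unfolding NX_def NY_def by auto
  next
    case False
    then have "NY \<subseteq> {k. k < 2 * n \<and> even k}" "NX \<subseteq> {k. k < 2 * n \<and> odd k}"
      using parity opposite unfolding NX_def NY_def by auto
    moreover have "n < card NY + card NX" using count by linarith
    ultimately obtain j where "j \<in> NY" "(j + d) mod (2 * n) \<in> NX"
      using exists_odd_shift_pair[OF _ _ \<open>odd d\<close>] by blast
    then show thesis using that[of j] False opposite parity shift unfolding NX_def NY_def by auto
  qed
qed

lemma M_cycle_close_path:
  assumes mat: "matching E M" and path: "M_path E M ps x y"
    and seg: "distinct seg" "seg \<noteq> []" "even (length seg)" "M_alternating E M seg"
    and disj: "set ps \<inter> set seg = {}"
    and ends: "{y, hd seg} \<in> E" "{x, last seg} \<in> E"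
  shows "M_cycle E M (ps @ seg)"
proof -
  have ne: "ps \<noteq> []" and len: "2 \<le> length ps" and dist: "distinct ps"
    and hd: "hd ps = x" and last: "last ps = y"
    using path unfolding M_path_def is_path_def by auto
  have alt: "M_alternating E M ps"
    using path unfolding M_path_def is_path_def M_alternating_def by auto
  have even: "even (length ps)" using M_path_even_length[OF path] .
  have "hd seg \<notin> set ps" "last seg \<notin> set ps" using disj seg(2) by auto
  then have unmatched: "{y, hd seg} \<notin> M" "{x, last seg} \<notin> M"
    using M_path_ends_unmatched_outside[OF mat path] by auto
  have "M_alternating E M (ps @ seg)"
    using M_alternating_append[OF alt seg(4) even ne seg(2)] ends(1) unmatched(1) last by simp
  moreover have "{last (ps @ seg), hd (ps @ seg)} = {x, last seg}"
    using ne seg(2) hd by (simp add: insert_commute)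
  moreover have "3 \<le> length (ps @ seg)" using len seg(2) by (cases seg) auto
  ultimately show ?thesis
    using dist seg disj even ends(2) unmatched(2) by (intro M_cycle_of_M_alternating) simp_all
qed

lemma M_cycle_segment_between:
  assumes side: "\<And>u v. {u, v} \<in> E \<Longrightarrow> u \<in> A \<longleftrightarrow> v \<notin> A"
    and mat: "matching E M" and cyc: "M_cycle E M cs"
    and opposite: "x \<in> A \<longleftrightarrow> y \<notin> A"
    and many: "length cs div 2 < e_between E {x, y} (set cs)"
    and i: "1 \<le> i" "i \<le> length cs div 2"
  obtains seg where "length seg = 2 * i" "distinct seg" "set seg \<subseteq> set cs"
    "M_alternating E M seg" "{y, hd seg} \<in> E" "{x, last seg} \<in> E"
proof -
  let ?L = "length cs" and ?n = "length cs div 2" and ?d = "2 * i - 1"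
  obtain f where walk: "M_alternating_walk E M f"
    and periodic: "\<And>a b. f a = f b \<longleftrightarrow> a mod ?L = b mod ?L" and image: "f ` {..<?L} = set cs"
    using M_cycle_alternating_walk[OF mat cyc] by blast
  have "even ?L" using cyc unfolding M_cycle_def by (metis dvd_triv_left)
  then have L: "?L = 2 * ?n" by simp
  have L0: "0 < ?L" using cyc unfolding M_cycle_def is_cycle_def by linarith
  have walk_edges: "\<And>j. {f j, f (Suc j)} \<in> E" using walk unfolding M_alternating_walk_def by blast
  have periodic_n: "\<And>a b. f a = f b \<longleftrightarrow> a mod (2 * ?n) = b mod (2 * ?n)"
    unfolding L[symmetric] by (rule periodic)
  have many_n: "?n < e_between E {x, y} (f ` {..<2 * ?n})"
    using many image unfolding L[symmetric] by simp
  have "odd ?d" using i by simp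
  from exists_neighbour_pair_at_odd_distance[OF side opposite walk_edges periodic_n many_n this]
  obtain j where "even j" and pair: "{y, f j} \<in> E \<and> {x, f (j + ?d)} \<in> E \<or>
    {x, f j} \<in> E \<and> {y, f (j + ?d)} \<in> E" .
  have in_cycle: "f k \<in> set cs" for k
  proof -
    have "f k = f (k mod ?L)" "k mod ?L < ?L" using periodic L0 by simp_all
    then show ?thesis using image by blast
  qed
  define seg where "seg = map f [j..<j + 2 * i]"
  have len: "length seg = 2 * i" and ne: "seg \<noteq> []" using i by (simp_all add: seg_def)
  have "distinct seg" using distinct_window_of_periodic[OF periodic] i L by (simp add: seg_def)
  moreover have "set seg \<subseteq> set cs" using in_cycle by (auto simp: seg_def)
  moreover have "M_alternating E M seg"
    using M_alternating_walk_window[OF walk \<open>even j\<close>] by (simp add: seg_def)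
  moreover have "hd seg = f j" "last seg = f (j + ?d)"
    using i by (simp_all add: seg_def hd_map last_map)
  ultimately show thesis
    using pair that[of seg] that[of "rev seg"] len ne M_alternating_rev[of E M seg]
    by (auto simp: hd_rev last_rev)
qed

theorem lemma1:
  fixes V :: "'a set" and E M :: "'a set set" and cs ps :: "'a list" and x y :: 'a
  assumes "graph V E" and "bipartite V E" and "matching E M"
    and "M_cycle E M cs"
    and "M_path E M ps x y" and "set ps \<inter> set cs = {}"
    and "e_between E {x, y} (set cs) > length cs div 2"
  shows "\<forall>i. 1 \<le> i \<and> i \<le> length cs div 2 \<longrightarrow>
           (\<exists>cs'. M_cycle (induced_edges E (set ps \<union> set cs)) M cs' \<and>
                  length cs' = length ps + 2 * i)"
proof (intro allI impI)
  fix i assume i: "1 \<le> i \<and> i \<le> length cs div 2"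
  obtain A where side: "\<And>u v. {u, v} \<in> E \<Longrightarrow> u \<in> A \<longleftrightarrow> v \<notin> A"
    using bipartite_sides[OF assms(2)] by blast
  have "x \<in> A \<longleftrightarrow> y \<notin> A" using M_path_ends_opposite_sides[OF side assms(5)] .
  then obtain seg where seg: "length seg = 2 * i" "distinct seg" "set seg \<subseteq> set cs"
    "M_alternating E M seg" "{y, hd seg} \<in> E" "{x, last seg} \<in> E"
    using M_cycle_segment_between[OF side assms(3,4) _ assms(7)] i by blast
  have "seg \<noteq> []" "even (length seg)" "set ps \<inter> set seg = {}"
    using seg(1,3) i assms(6) by auto
  then have "M_cycle E M (ps @ seg)"
    using M_cycle_close_path[OF assms(3,5) seg(2)] seg(4-6) by blast
  moreover have "set (ps @ seg) \<subseteq> set ps \<union> set cs" using seg(3) by auto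
  ultimately have "M_cycle (induced_edges E (set ps \<union> set cs)) M (ps @ seg)"
    by (rule M_cycle_induced_edges)
  then show "\<exists>cs'. M_cycle (induced_edges E (set ps \<union> set cs)) M cs' \<and>
      length cs' = length ps + 2 * i"
    using seg(1) by auto
qed

end
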